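(* Let $G$ be a finite triangle-free graph of order $n$. (i) If $\delta(G)\geq 1$, then $\beta_{s}(G)\leq n+6-2\sqrt{9+2n}$. (ii) If $\delta(G)\geq 2$, then $\beta_{D}(G)\leq n+4-2\sqrt{4+2n}$. Furthermore, the inequality in (i) holds with equality if and only if $G\in\Lambda$, and the inequality in (ii) holds with equality if and only if $G\in\Omega$.
   Context: All graphs are finite and simple. For a vertex $v$, $N(v)$ is its open neighborhood and $N[v]=N(v)\cup\{v\}$; $\delta(G)$ and $\Delta(G)$ denote minimum and maximum degree, and $G[S]$ is the subgraph induced by $S$. For $f:V(G)\to\mathbb{R}$ and $S\subseteq V(G)$, $f(S)=\sum_{v\in S}f(v)$. A signed bad function (SBF) of $G$ is a function $f:V(G)\to\{-1,1\}$ with $f(N[v])\leq 1$ for every $v\in V(G)$; the signed bad number is $\beta_s(G)=\max\{f(V(G)) : f \text{ is an SBF of } G\}$. A bad function (BF) of $G$ is a function $f:V(G)\to\{-1,1\}$ with $f(N(v))\leq 1$ for every $v\in V(G)$; the negative decision number is $\beta_D(G)=\max\{f(V(G)) : f \text{ is a BF of } G\}$. The corona $G_1\circ G_2$ is the graph formed from one copy of $G_1$ and $|V(G_1)|$ copies of $G_2$, where the $i$th vertex of $G_1$ is joined to every vertex of the $i$th copy of $G_2$. $\overline{K_m}$ denotes the edgeless graph on $m$ vertices. $\Lambda$ is the family of all graphs $G$ obtained, for some positive integer $p$, from $K_{p,p}\circ\overline{K_{p+2}}$ by adding some new edges (possibly none) whose endpoints both lie in the copies of $\overline{K_{p+2}}$,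 such that the resulting graph is triangle-free and $\Delta(G[V(G)\setminus V(K_{p,p})])\leq 1$. $\Omega$ is the family of all graphs $G$ obtained, for some positive integer $p$, from $K_{p,p}\circ\overline{K_{p+1}}$ by adding some new edges (possibly none) whose endpoints both lie in the copies of $\overline{K_{p+1}}$, such that the resulting graph is triangle-free and $\Delta(G[V(G)\setminus V(K_{p,p})])\leq 2$. *)

theory Defs
  imports Complex_Main
begin

definition simple_graph :: "'a set \<Rightarrow> ('a \<Rightarrow> 'a \<Rightarrow> bool) \<Rightarrow> bool" where
  "simple_graph V E \<longleftrightarrow> finite V \<and> (\<forall>x y. E x y \<longrightarrow> x \<in> V \<and> y \<in> V)
     \<and> (\<forall>x y. E x y \<longrightarrow> E y x) \<and> (\<forall>x. \<not> E x x)"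

definition nbhd :: "'a set \<Rightarrow> ('a \<Rightarrow> 'a \<Rightarrow> bool) \<Rightarrow> 'a \<Rightarrow> 'a set" where
  "nbhd V E v = {u \<in> V. E v u}"

definition cnbhd :: "'a set \<Rightarrow> ('a \<Rightarrow> 'a \<Rightarrow> bool) \<Rightarrow> 'a \<Rightarrow> 'a set" where
  "cnbhd V E v = insert v (nbhd V E v)"

definition triangle_free :: "'a set \<Rightarrow> ('a \<Rightarrow> 'a \<Rightarrow> bool) \<Rightarrow> bool" where
  "triangle_free V E \<longleftrightarrow> \<not> (\<exists>x\<in>V. \<exists>y\<in>V. \<exists>z\<in>V. E x y \<and> E y z \<and> E x z)"

definition min_deg_ge :: "'a set \<Rightarrow> ('a \<Rightarrow> 'a \<Rightarrow> bool) \<Rightarrow> nat \<Rightarrow> bool" where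
  "min_deg_ge V E k \<longleftrightarrow> (\<forall>v\<in>V. card (nbhd V E v) \<ge> k)"

definition is_SBF :: "'a set \<Rightarrow> ('a \<Rightarrow> 'a \<Rightarrow> bool) \<Rightarrow> ('a \<Rightarrow> int) \<Rightarrow> bool" where
  "is_SBF V E f \<longleftrightarrow> (\<forall>v\<in>V. f v \<in> {-1, 1}) \<and> (\<forall>v\<in>V. sum f (cnbhd V E v) \<le> 1)"

definition is_BF :: "'a set \<Rightarrow> ('a \<Rightarrow> 'a \<Rightarrow> bool) \<Rightarrow> ('a \<Rightarrow> int) \<Rightarrow> bool" where
  "is_BF V E f \<longleftrightarrow> (\<forall>v\<in>V. f v \<in> {-1, 1}) \<and> (\<forall>v\<in>V. sum f (nbhd V E v) \<le> 1)"

definition signed_bad_number :: "'a set \<Rightarrow> ('a \<Rightarrow> 'a \<Rightarrow> bool) \<Rightarrow> int" where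
  "signed_bad_number V E = Max {sum f V | f. is_SBF V E f}"

definition negative_decision_number :: "'a set \<Rightarrow> ('a \<Rightarrow> 'a \<Rightarrow> bool) \<Rightarrow> int" where
  "negative_decision_number V E = Max {sum f V | f. is_BF V E f}"

text \<open>Graphs obtained (up to isomorphism) from the corona K_{p,p} o (empty graph on q
  vertices) by adding edges among the corona leaves, such that the result is
  triangle-free and the leaves induce a subgraph of maximum degree at most d.
  A, B are the two sides of K_{p,p}; L is the set of leaves and h assigns each leaf
  to the vertex of K_{p,p} it is attached to.\<close>
definition corona_family :: "nat \<Rightarrow> nat \<Rightarrow> 'a set \<Rightarrow> ('a \<Rightarrow> 'a \<Rightarrow> bool) \<Rightarrow> bool" where
  "corona_family qoff d V E \<longleftrightarrow>
     (\<exists>p::nat. \<exists>A B L. \<exists>h :: 'a \<Rightarrow> 'a. p \<ge> 1 \<and>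
        V = A \<union> B \<union> L \<and> A \<inter> B = {} \<and> A \<inter> L = {} \<and> B \<inter> L = {} \<and>
        card A = p \<and> card B = p \<and>
        (\<forall>l\<in>L. h l \<in> A \<union> B) \<and>
        (\<forall>x\<in>A \<union> B. card {l \<in> L. h l = x} = p + qoff) \<and>
        (\<forall>u\<in>A \<union> B. \<forall>v\<in>A \<union> B. E u v \<longleftrightarrow> (u \<in> A \<and> v \<in> B) \<or> (u \<in> B \<and> v \<in> A)) \<and>
        (\<forall>l\<in>L. \<forall>x\<in>A \<union> B. E l x \<longleftrightarrow> h l = x) \<and>
        triangle_free V E \<and>
        (\<forall>l\<in>L. card (nbhd L E l) \<le> d))"

text \<open>The family Lambda: q = p+2 leaves per vertex, leaf subgraph of max degree \<le> 1.\<close>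
definition in_Lambda :: "'a set \<Rightarrow> ('a \<Rightarrow> 'a \<Rightarrow> bool) \<Rightarrow> bool" where
  "in_Lambda V E \<longleftrightarrow> corona_family 2 1 V E"

text \<open>The family Omega: q = p+1 leaves per vertex, leaf subgraph of max degree \<le> 2.\<close>
definition in_Omega :: "'a set \<Rightarrow> ('a \<Rightarrow> 'a \<Rightarrow> bool) \<Rightarrow> bool" where
  "in_Omega V E \<longleftrightarrow> corona_family 1 2 V E"

end

(* For a (signed) bad function f let P and M be the vertices where f is 1 and -1. The local
   conditions, together with the minimum degree, say that every vertex of P has a neighbour in M
   and every vertex of M has at most q more neighbours in P than in M, where q = 2 for signed bad
   functions and q = 1 for bad functions. Counting the edges between P and M from both sides and
   bounding the edges of the triangle-free graph G[M] by Mantel's theorem gives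
   2|P| <= |M|^2 + 2q|M|, which rearranges to f(V) = |P| - |M| <= n + 2(q+1) - 2 sqrt((q+1)^2 + 2n).
   In the equality case every vertex of P has exactly one neighbour in M and G[M] is extremal for
   Mantel's theorem, hence K_{p,p}: this is the corona structure. Conversely, on such a corona the
   function that is 1 exactly on the leaves attains the bound. *)

theory Submission
  imports Defs
begin

lemma simple_graph_symp: "simple_graph V E \<Longrightarrow> symp E"
  by (simp add: simple_graph_def symp_def)

lemma finite_nbhd: "finite M \<Longrightarrow> finite (nbhd M E v)"
  by (simp add: nbhd_def)

lemma nbhd_subset: "nbhd M E v \<subseteq> M"
  by (auto simp: nbhd_def)

lemma triangle_free_subset: "triangle_free V E \<Longrightarrow> M \<subseteq> V \<Longrightarrow> triangle_free M E"
  by (auto simp: triangle_free_def)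

lemma triangle_free_nbhd_independent:
  assumes "triangle_free M E" "w \<in> M" "x \<in> nbhd M E w" "y \<in> nbhd M E w"
  shows "\<not> E x y"
  using assms by (auto simp: triangle_free_def nbhd_def)

lemma triangle_free_adjacent_card_nbhd:
  assumes "finite M" "triangle_free M E" "v \<in> M" "u \<in> nbhd M E v"
  shows "card (nbhd M E v) + card (nbhd M E u) \<le> card M"
proof -
  have "nbhd M E v \<inter> nbhd M E u = {}"
    using assms(2-4) by (auto simp: triangle_free_def nbhd_def)
  then have "card (nbhd M E v) + card (nbhd M E u) = card (nbhd M E v \<union> nbhd M E u)"
    by (simp add: card_Un_disjoint finite_nbhd assms(1))
  also have "\<dots> \<le> card M"
    by (intro card_mono assms(1)) (auto simp: nbhd_def)
  finally show ?thesis .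
qed

lemma sum_sign_eq_card_diff:
  fixes f :: "'a \<Rightarrow> int"
  assumes "finite S" "\<forall>v\<in>S. f v \<in> {-1, 1}"
  shows "sum f S = int (card {v\<in>S. f v = 1}) - int (card {v\<in>S. f v = -1})"
proof -
  have S: "S = {v\<in>S. f v = 1} \<union> {v\<in>S. f v = -1}" using assms(2) by auto
  have "sum f S = sum f {v\<in>S. f v = 1} + sum f {v\<in>S. f v = -1}"
    by (subst S, rule sum.union_disjoint) (use assms(1) in auto)
  also have "\<dots> = (\<Sum>v\<in>{v\<in>S. f v = 1}. 1) + (\<Sum>v\<in>{v\<in>S. f v = -1}. -1)"
    by (intro arg_cong2[where f = "(+)"] sum.cong) auto
  finally show ?thesis by simp
qed

lemma finite_sums_of_sign_fns:
  assumes "finite V"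
  shows "finite {sum f V | f :: 'a \<Rightarrow> int. \<forall>v\<in>V. f v \<in> {-1, 1}}"
proof (rule finite_subset)
  show "{sum f V | f :: 'a \<Rightarrow> int. \<forall>v\<in>V. f v \<in> {-1, 1}} \<subseteq> {- int (card V) .. int (card V)}"
  proof clarify
    fix f :: "'a \<Rightarrow> int" assume pm: "\<forall>v\<in>V. f v \<in> {-1, 1}"
    have "\<bar>sum f V\<bar> \<le> (\<Sum>v\<in>V. \<bar>f v\<bar>)" by (rule sum_abs)
    also have "\<dots> = (\<Sum>v\<in>V. 1)" using pm by (intro sum.cong) auto
    finally show "sum f V \<in> {- int (card V) .. int (card V)}" by auto
  qed
qed simp

lemma sum_nbhd_swap:
  fixes g :: "'a \<Rightarrow> 'b :: comm_semiring_1"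
  assumes "finite P" "finite M" "symp E"
  shows "(\<Sum>v\<in>P. \<Sum>u\<in>nbhd M E v. g u) = (\<Sum>u\<in>M. of_nat (card (nbhd P E u)) * g u)"
proof -
  have "(\<Sum>v\<in>P. \<Sum>u\<in>nbhd M E v. g u) = (\<Sum>u\<in>M. \<Sum>v\<in>{v. v \<in> P \<and> E v u}. g u)"
    unfolding nbhd_def by (rule sum.swap_restrict) (use assms in auto)
  also have "\<dots> = (\<Sum>u\<in>M. of_nat (card (nbhd P E u)) * g u)"
  proof -
    have "{v. v \<in> P \<and> E v u} = nbhd P E u" for u
      using assms(3) by (auto simp: nbhd_def symp_def)
    then show ?thesis by simp
  qed
  finally show ?thesis .
qed

(* Stated as a defect inequality so that it also yields the equality case of Mantel's theorem. *)
lemma mantel_defect: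
  fixes M :: "'a set" and E :: "'a \<Rightarrow> 'a \<Rightarrow> bool"
  defines "d \<equiv> \<lambda>v. int (card (nbhd M E v))" and "m \<equiv> int (card M)"
  assumes fin: "finite M" and sym: "symp E" and tf: "triangle_free M E"
  shows "(\<Sum>v\<in>M. (2 * d v - m)\<^sup>2) \<le> m * (m\<^sup>2 - 2 * sum d M)"
proof -
  have "2 * (\<Sum>v\<in>M. (d v)\<^sup>2) = (\<Sum>v\<in>M. \<Sum>u\<in>nbhd M E v. d v + d u)"
    using sum_nbhd_swap[OF fin fin sym, of d]
    by (simp add: sum.distrib d_def power2_eq_square)
  also have "\<dots> \<le> (\<Sum>v\<in>M. \<Sum>u\<in>nbhd M E v. m)"
    using triangle_free_adjacent_card_nbhd[OF fin tf]
    by (intro sum_mono) (simp add: d_def m_def flip: of_nat_add)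
  also have "\<dots> = m * sum d M"
    by (simp add: d_def sum_distrib_left mult.commute)
  finally have "2 * (\<Sum>v\<in>M. (d v)\<^sup>2) \<le> m * sum d M" .
  moreover have "(\<Sum>v\<in>M. (2 * d v - m)\<^sup>2) = 4 * (\<Sum>v\<in>M. (d v)\<^sup>2) - 4 * (m * sum d M) + m ^ 3"
    by (simp add: power2_eq_square power3_eq_cube algebra_simps sum.distrib sum_subtractf
        sum_distrib_left sum_distrib_right m_def)
  moreover have "m * (m\<^sup>2 - 2 * sum d M) = m ^ 3 - 2 * (m * sum d M)"
    by (simp add: power2_eq_square power3_eq_cube algebra_simps)
  ultimately show ?thesis by linarith
qed

lemma mantel:
  assumes "finite M" "symp E" "triangle_free M E"
  shows "2 * (\<Sum>v\<in>M. card (nbhd M E v)) \<le> card M ^ 2"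
proof (cases "M = {}")
  case False
  let ?m = "int (card M)" and ?S = "\<Sum>v\<in>M. int (card (nbhd M E v))"
  have "0 \<le> (\<Sum>v\<in>M. (2 * int (card (nbhd M E v)) - ?m)\<^sup>2)" by (intro sum_nonneg) simp
  also have "\<dots> \<le> ?m * (?m\<^sup>2 - 2 * ?S)" by (rule mantel_defect[OF assms])
  finally have "0 \<le> ?m * (?m\<^sup>2 - 2 * ?S)" .
  moreover have "0 < ?m" using False assms(1) by (simp add: card_gt_0_iff)
  ultimately have "2 * ?S \<le> ?m\<^sup>2"
    by (simp add: zero_le_mult_iff)
  then have "int (2 * (\<Sum>v\<in>M. card (nbhd M E v))) \<le> int (card M ^ 2)"
    by simp
  then show ?thesis by (simp only: of_nat_le_iff)
qed simp

lemma mantel_eq_imp_regular: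
  assumes "finite M" "symp E" "triangle_free M E"
    and "2 * (\<Sum>v\<in>M. card (nbhd M E v)) = card M ^ 2" and "v \<in> M"
  shows "2 * card (nbhd M E v) = card M"
proof -
  let ?m = "int (card M)"
  have "2 * (\<Sum>v\<in>M. int (card (nbhd M E v))) = ?m\<^sup>2"
    using arg_cong[OF assms(4), of int] by simp
  then have "(\<Sum>v\<in>M. (2 * int (card (nbhd M E v)) - ?m)\<^sup>2) \<le> 0"
    using mantel_defect[OF assms(1-3)] by simp
  moreover have "\<forall>v\<in>M. 0 \<le> (2 * int (card (nbhd M E v)) - ?m)\<^sup>2" by simp
  ultimately have "\<forall>v\<in>M. (2 * int (card (nbhd M E v)) - ?m)\<^sup>2 = 0"
    using sum_nonneg_eq_0_iff[OF assms(1)] sum_nonneg by (metis (no_types, lifting) order_antisym)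
  then have "int (2 * card (nbhd M E v)) = int (card M)" using assms(5) by simp
  then show ?thesis by (simp only: of_nat_eq_iff)
qed

lemma card_dominated_le:
  assumes finP: "finite P" and finM: "finite M" and sym: "symp E" and tf: "triangle_free M E"
    and dominated: "\<forall>v\<in>P. 1 \<le> card (nbhd M E v)"
    and excess: "\<forall>u\<in>M. card (nbhd P E u) \<le> card (nbhd M E u) + c"
  shows "2 * card P \<le> card M ^ 2 + 2 * c * card M"
    and "2 * card P = card M ^ 2 + 2 * c * card M \<Longrightarrow>
      (\<forall>v\<in>P. card (nbhd M E v) = 1) \<and> (\<forall>u\<in>M. card (nbhd P E u) = card (nbhd M E u) + c) \<and>
      (\<forall>u\<in>M. 2 * card (nbhd M E u) = card M)"
proof -
  have le1: "card P \<le> (\<Sum>v\<in>P. card (nbhd M E v))"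
    using sum_mono[of P "\<lambda>_. 1" "\<lambda>v. card (nbhd M E v)"] dominated by simp
  have swap: "(\<Sum>v\<in>P. card (nbhd M E v)) = (\<Sum>u\<in>M. card (nbhd P E u))"
    using sum_nbhd_swap[OF finP finM sym, of "\<lambda>_. 1 :: nat"] by simp
  have le2: "(\<Sum>u\<in>M. card (nbhd P E u)) \<le> (\<Sum>u\<in>M. card (nbhd M E u) + c)"
    using excess by (intro sum_mono) auto
  have distr: "(\<Sum>u\<in>M. card (nbhd M E u) + c) = (\<Sum>u\<in>M. card (nbhd M E u)) + c * card M"
    by (simp add: sum.distrib)
  have le3: "2 * (\<Sum>u\<in>M. card (nbhd M E u)) \<le> card M ^ 2"
    by (rule mantel[OF finM sym tf])
  show "2 * card P \<le> card M ^ 2 + 2 * c * card M"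
    using le1 swap le2 distr le3 by linarith
  assume "2 * card P = card M ^ 2 + 2 * c * card M"
  then have eq1: "(\<Sum>v\<in>P. 1) = (\<Sum>v\<in>P. card (nbhd M E v))"
    and eq2: "(\<Sum>u\<in>M. card (nbhd P E u)) = (\<Sum>u\<in>M. card (nbhd M E u) + c)"
    and eq3: "2 * (\<Sum>u\<in>M. card (nbhd M E u)) = card M ^ 2"
    using le1 swap le2 distr le3 by auto
  have "card (nbhd M E v) = 1" if "v \<in> P" for v
    using sum_mono_inv[OF eq1 _ that finP] dominated by auto
  moreover have "card (nbhd P E u) = card (nbhd M E u) + c" if "u \<in> M" for u
    using sum_mono_inv[OF eq2 _ that finM] excess by auto
  ultimately show "(\<forall>v\<in>P. card (nbhd M E v) = 1) \<and>
      (\<forall>u\<in>M. card (nbhd P E u) = card (nbhd M E u) + c) \<and>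
      (\<forall>u\<in>M. 2 * card (nbhd M E u) = card M)"
    using mantel_eq_imp_regular[OF finM sym tf eq3] by blast
qed

lemma regular_triangle_free_complete_bipartite:
  assumes fin: "finite M" and sym: "symp E" and tf: "triangle_free M E" and "M \<noteq> {}"
    and reg: "\<forall>v\<in>M. 2 * card (nbhd M E v) = card M"
  obtains A B where "M = A \<union> B" "A \<inter> B = {}" "2 * card A = card M" "2 * card B = card M"
    "\<forall>x\<in>M. \<forall>y\<in>M. E x y \<longleftrightarrow> (x \<in> A \<and> y \<in> B) \<or> (x \<in> B \<and> y \<in> A)"
proof -
  have opposite: "nbhd M E x = M - nbhd M E w" if w: "w \<in> M" and x: "x \<in> nbhd M E w" for w x
  proof -
    have "x \<in> M" using x by (simp add: nbhd_def)
    have sub: "nbhd M E x \<subseteq> M - nbhd M E w"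
    proof
      fix y assume "y \<in> nbhd M E x"
      then show "y \<in> M - nbhd M E w"
        using triangle_free_nbhd_independent[OF tf w x, of y] by (auto simp: nbhd_def)
    qed
    have "2 * card (nbhd M E w) = card M" "2 * card (nbhd M E x) = card M"
      using reg w \<open>x \<in> M\<close> by auto
    then have "card (M - nbhd M E w) = card (nbhd M E x)"
      by (simp add: card_Diff_subset fin finite_nbhd nbhd_subset)
    then show ?thesis using card_subset_eq[OF _ sub] fin by simp
  qed
  obtain u where u: "u \<in> M" using \<open>M \<noteq> {}\<close> by blast
  define A where "A = nbhd M E u"
  define B where "B = M - A"
  have A_sub: "A \<subseteq> M" by (simp add: A_def nbhd_subset)
  have card_A: "2 * card A = card M" using reg u by (simp add: A_def)
  then have "A \<noteq> {}" using \<open>M \<noteq> {}\<close> fin by auto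
  then obtain v where v: "v \<in> A" by blast
  have nbhd_A: "nbhd M E x = B" if "x \<in> A" for x
    using opposite[OF u, of x] that by (simp add: A_def B_def)
  have nbhd_B: "nbhd M E y = A" if "y \<in> B" for y
  proof -
    have "v \<in> M" "y \<in> nbhd M E v" using v that A_sub nbhd_A by auto
    then have "nbhd M E y = M - (M - A)" using opposite[of v y] nbhd_A[OF v] by (simp add: B_def)
    then show ?thesis using A_sub by auto
  qed
  show ?thesis
  proof
    show "M = A \<union> B" "A \<inter> B = {}" using A_sub by (auto simp: B_def)
    show "2 * card A = card M" by (rule card_A)
    show "2 * card B = card M"
      using card_A fin A_sub by (simp add: B_def card_Diff_subset finite_subset)
    show "\<forall>x\<in>M. \<forall>y\<in>M. E x y \<longleftrightarrow> (x \<in> A \<and> y \<in> B) \<or> (x \<in> B \<and> y \<in> A)"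
    proof (intro ballI)
      fix x y assume "x \<in> M" "y \<in> M"
      then have "E x y \<longleftrightarrow> y \<in> nbhd M E x" by (simp add: nbhd_def)
      then show "E x y \<longleftrightarrow> (x \<in> A \<and> y \<in> B) \<or> (x \<in> B \<and> y \<in> A)"
        using nbhd_A nbhd_B \<open>x \<in> M\<close> by (cases "x \<in> A") (auto simp: B_def)
    qed
  qed
qed

(* SBFs are the case d = 1, q = 2 and BFs the case d = 2, q = 1. In the extremal coronas q is
   the number of extra leaves per core vertex and d bounds the degrees among the leaves. *)
definition bounded_sign_fn :: "'a set \<Rightarrow> ('a \<Rightarrow> 'a \<Rightarrow> bool) \<Rightarrow> nat \<Rightarrow> nat \<Rightarrow> ('a \<Rightarrow> int) \<Rightarrow> bool" where
  "bounded_sign_fn V E d q f \<longleftrightarrow> (\<forall>v\<in>V. f v \<in> {-1, 1}) \<and>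
     (\<forall>v\<in>V. sum f (nbhd V E v) \<le> (if f v = 1 then int d - 1 else int q))"

lemma is_SBF_iff_bounded_sign_fn:
  assumes "simple_graph V E"
  shows "is_SBF V E f \<longleftrightarrow> bounded_sign_fn V E 1 2 f"
proof -
  have "sum f (cnbhd V E v) = f v + sum f (nbhd V E v)" for v
    using assms by (simp add: cnbhd_def nbhd_def simple_graph_def)
  then show ?thesis by (auto simp: is_SBF_def bounded_sign_fn_def; smt (verit))
qed

lemma is_BF_iff_bounded_sign_fn: "is_BF V E f \<longleftrightarrow> bounded_sign_fn V E 2 1 f"
  by (simp add: is_BF_def bounded_sign_fn_def)

definition corona_bound :: "nat \<Rightarrow> nat \<Rightarrow> real" where
  "corona_bound k n = real n + 2 * real k - 2 * sqrt (real k ^ 2 + 2 * real n)"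

lemma corona_bound_ge:
  fixes a m c :: nat
  assumes "2 * a \<le> m ^ 2 + 2 * c * m"
  shows "real a - real m \<le> corona_bound (c + 1) (a + m)"
    and "real a - real m = corona_bound (c + 1) (a + m) \<longleftrightarrow> 2 * a = m ^ 2 + 2 * c * m"
proof -
  define x where "x = real (c + 1) ^ 2 + 2 * real (a + m)"
  define y where "y = real m + real (c + 1)"
  have "0 \<le> x" "0 \<le> y" by (simp_all add: x_def y_def)
  have gap: "y ^ 2 - x = real (m ^ 2 + 2 * c * m) - real (2 * a)"
    by (simp add: x_def y_def power2_eq_square algebra_simps)
  have diff: "corona_bound (c + 1) (a + m) - (real a - real m) = 2 * (y - sqrt x)"
    by (simp add: corona_bound_def x_def y_def algebra_simps)
  have "x \<le> y ^ 2" using gap of_nat_mono[OF assms, where 'a = real] by linarith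
  then have "sqrt x \<le> y" by (rule real_le_lsqrt[OF \<open>0 \<le> y\<close>])
  then show "real a - real m \<le> corona_bound (c + 1) (a + m)" using diff by argo
  have "real a - real m = corona_bound (c + 1) (a + m) \<longleftrightarrow> sqrt x = y"
    using diff by auto
  also have "\<dots> \<longleftrightarrow> x = y ^ 2"
    using \<open>0 \<le> x\<close> \<open>0 \<le> y\<close> real_sqrt_unique by fastforce
  also have "\<dots> \<longleftrightarrow> 2 * a = m ^ 2 + 2 * c * m"
    using gap of_nat_eq_iff[where 'a = real] by smt
  finally show "real a - real m = corona_bound (c + 1) (a + m) \<longleftrightarrow> 2 * a = m ^ 2 + 2 * c * m" .
qed

locale corona_graph =
  fixes V :: "'a set" and E :: "'a \<Rightarrow> 'a \<Rightarrow> bool" and q d p :: nat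
    and A B L :: "'a set" and h :: "'a \<Rightarrow> 'a"
  assumes graph: "simple_graph V E"
    and p_pos: "p \<ge> 1"
    and vertices: "V = A \<union> B \<union> L"
    and disjoint: "A \<inter> B = {}" "A \<inter> L = {}" "B \<inter> L = {}"
    and card_sides: "card A = p" "card B = p"
    and h_core: "\<forall>l\<in>L. h l \<in> A \<union> B"
    and card_fibre: "\<forall>x\<in>A \<union> B. card {l \<in> L. h l = x} = p + q"
    and core_edges: "\<forall>u\<in>A \<union> B. \<forall>v\<in>A \<union> B. E u v \<longleftrightarrow> (u \<in> A \<and> v \<in> B) \<or> (u \<in> B \<and> v \<in> A)"
    and leaf_edges: "\<forall>l\<in>L. \<forall>x\<in>A \<union> B. E l x \<longleftrightarrow> h l = x"
    and tri_free: "triangle_free V E"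
    and leaf_degree: "\<forall>l\<in>L. card (nbhd L E l) \<le> d"

lemma corona_family_iff:
  "simple_graph V E \<Longrightarrow> corona_family q d V E \<longleftrightarrow> (\<exists>p A B L h. corona_graph V E q d p A B L h)"
  unfolding corona_family_def corona_graph_def by auto

context corona_graph
begin

lemma finite_vertices: "finite V"
  using graph by (simp add: simple_graph_def)

lemma card_core: "card (A \<union> B) = 2 * p"
  using finite_vertices disjoint card_sides by (simp add: vertices card_Un_disjoint)

lemma card_vertices: "card V = card L + 2 * p"
  using finite_vertices disjoint card_core by (simp add: vertices card_Un_disjoint Int_Un_distrib2)

lemma card_leaves: "card L = 2 * p * (p + q)"
proof -
  have "L = (\<Union>x\<in>A \<union> B. {l \<in> L. h l = x})" using h_core by auto
  also have "card \<dots> = (\<Sum>x\<in>A \<union> B. card {l \<in> L. h l = x})"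
    using finite_vertices by (intro card_UN_disjoint) (auto simp: vertices)
  also have "\<dots> = (\<Sum>x\<in>A \<union> B. p + q)" using card_fibre by simp
  finally show ?thesis using card_core by simp
qed

lemma core_leaf_edge:
  assumes "x \<in> A \<union> B" "l \<in> L"
  shows "E x l \<longleftrightarrow> h l = x"
proof -
  have "E x l \<longleftrightarrow> E l x" using graph by (auto simp: simple_graph_def)
  then show ?thesis using leaf_edges assms by blast
qed

lemma nbhd_core: "x \<in> A \<union> B \<Longrightarrow> nbhd V E x = nbhd (A \<union> B) E x \<union> {l \<in> L. h l = x}"
  using core_leaf_edge by (auto simp: nbhd_def vertices)

lemma card_nbhd_core: "x \<in> A \<union> B \<Longrightarrow> card (nbhd (A \<union> B) E x) = p"
proof -
  have "nbhd (A \<union> B) E x = (if x \<in> A then B else A)" if "x \<in> A \<union> B"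
    using that core_edges disjoint(1) by (auto simp: nbhd_def)
  then show "x \<in> A \<union> B \<Longrightarrow> ?thesis" using card_sides by simp
qed

lemma nbhd_leaf: "l \<in> L \<Longrightarrow> nbhd V E l = insert (h l) (nbhd L E l)"
  using h_core leaf_edges by (auto simp: nbhd_def vertices)

definition leaf_sign :: "'a \<Rightarrow> int" where
  "leaf_sign v = (if v \<in> L then 1 else - 1)"

lemma sum_leaf_sign_leaves: "S \<subseteq> L \<Longrightarrow> sum leaf_sign S = int (card S)"
  by (simp add: leaf_sign_def subset_iff)

lemma sum_leaf_sign_core: "S \<inter> L = {} \<Longrightarrow> sum leaf_sign S = - int (card S)"
  by (simp add: leaf_sign_def disjoint_iff)

lemma sum_leaf_sign_nbhd_leaf:
  assumes "l \<in> L"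
  shows "sum leaf_sign (nbhd V E l) = int (card (nbhd L E l)) - 1"
proof -
  have "h l \<notin> L" using h_core disjoint assms by auto
  then have "sum leaf_sign (nbhd V E l) = leaf_sign (h l) + sum leaf_sign (nbhd L E l)"
    unfolding nbhd_leaf[OF assms] using finite_vertices by (simp add: vertices nbhd_def)
  then show ?thesis
    using \<open>h l \<notin> L\<close> sum_leaf_sign_leaves[OF nbhd_subset] by (simp add: leaf_sign_def)
qed

lemma sum_leaf_sign_nbhd_core:
  assumes core: "x \<in> A \<union> B"
  shows "sum leaf_sign (nbhd V E x) = int q"
proof -
  have fin: "finite (A \<union> B)" "finite L" using finite_vertices by (simp_all add: vertices)
  have "sum leaf_sign (nbhd V E x) = sum leaf_sign (nbhd (A \<union> B) E x) + sum leaf_sign {l \<in> L. h l = x}"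
    unfolding nbhd_core[OF core] using fin disjoint
    by (intro sum.union_disjoint finite_nbhd) (auto simp: nbhd_def)
  moreover have "nbhd (A \<union> B) E x \<inter> L = {}" using disjoint by (auto simp: nbhd_def)
  then have "sum leaf_sign (nbhd (A \<union> B) E x) = - int p"
    using sum_leaf_sign_core card_nbhd_core[OF core] by simp
  moreover have "sum leaf_sign {l \<in> L. h l = x} = int (p + q)"
    using sum_leaf_sign_leaves[of "{l \<in> L. h l = x}"] card_fibre core by simp
  ultimately show ?thesis by simp
qed

lemma bounded_sign_fn_leaf_sign: "bounded_sign_fn V E d q leaf_sign"
proof -
  have "sum leaf_sign (nbhd V E v) \<le> (if leaf_sign v = 1 then int d - 1 else int q)" if "v \<in> V" for v
  proof (cases "v \<in> L")
    case True
    then show ?thesis using sum_leaf_sign_nbhd_leaf leaf_degree by (fastforce simp: leaf_sign_def)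
  next
    case False
    then show ?thesis using sum_leaf_sign_nbhd_core that by (simp add: leaf_sign_def vertices)
  qed
  then show ?thesis by (simp add: bounded_sign_fn_def leaf_sign_def)
qed

lemma sum_leaf_sign_eq_corona_bound: "real_of_int (sum leaf_sign V) = corona_bound (q + 1) (card V)"
proof -
  have fin: "finite (A \<union> B)" "finite L" using finite_vertices by (simp_all add: vertices)
  then have "sum leaf_sign V = sum leaf_sign (A \<union> B) + sum leaf_sign L"
    using disjoint by (simp add: vertices sum.union_disjoint Int_Un_distrib2)
  also have "\<dots> = int (card L) - int (card (A \<union> B))"
    using disjoint by (simp add: sum_leaf_sign_core sum_leaf_sign_leaves Int_Un_distrib2)
  finally have "sum leaf_sign V = int (card L) - int (card (A \<union> B))" .
  moreover have "2 * card L = (2 * p) ^ 2 + 2 * q * (2 * p)"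
    using card_leaves by (simp add: power2_eq_square algebra_simps)
  ultimately show ?thesis
    using corona_bound_ge(2)[of "card L" "2 * p" q] card_core card_vertices by simp
qed

lemma ex_extremal_bounded_sign_fn:
  "\<exists>f. bounded_sign_fn V E d q f \<and> real_of_int (sum f V) = corona_bound (q + 1) (card V)"
  using bounded_sign_fn_leaf_sign sum_leaf_sign_eq_corona_bound by blast

end

lemma card_nbhd_eq_1_the_elem:
  assumes "card (nbhd M E l) = 1"
  shows "the_elem (nbhd M E l) \<in> M" and "x \<in> M \<Longrightarrow> E l x \<longleftrightarrow> the_elem (nbhd M E l) = x"
proof -
  obtain y where y: "nbhd M E l = {y}" using assms by (rule card_1_singletonE)
  then show "the_elem (nbhd M E l) \<in> M" using nbhd_subset by fastforce
  show "E l x \<longleftrightarrow> the_elem (nbhd M E l) = x" if "x \<in> M"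
    using y that by (auto simp: nbhd_def set_eq_iff)
qed

lemma corona_family_of_extremal_partition:
  assumes sg: "simple_graph V E" and tf: "triangle_free V E"
    and V: "V = P \<union> M" "P \<inter> M = {}" and "M \<noteq> {}"
    and one: "\<forall>v\<in>P. card (nbhd M E v) = 1"
    and excess: "\<forall>u\<in>M. card (nbhd P E u) = card (nbhd M E u) + q"
    and reg: "\<forall>u\<in>M. 2 * card (nbhd M E u) = card M"
    and leaf_deg: "\<forall>v\<in>P. card (nbhd P E v) \<le> d"
  shows "corona_family q d V E"
proof -
  have finM: "finite M" using sg V by (simp add: simple_graph_def)
  have sym: "symp E" using sg by (rule simple_graph_symp)
  have tfM: "triangle_free M E" using tf by (rule triangle_free_subset) (simp add: V)
  obtain A B where M: "M = A \<union> B" "A \<inter> B = {}" "2 * card A = card M" "2 * card B = card M"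
    and edges: "\<forall>x\<in>M. \<forall>y\<in>M. E x y \<longleftrightarrow> (x \<in> A \<and> y \<in> B) \<or> (x \<in> B \<and> y \<in> A)"
    using regular_triangle_free_complete_bipartite[OF finM sym tfM \<open>M \<noteq> {}\<close> reg] .
  define p where "p = card A"
  define h where "h l = the_elem (nbhd M E l)" for l
  have h_M: "h l \<in> M" if "l \<in> P" for l
    using card_nbhd_eq_1_the_elem(1)[of M E l] one that by (simp add: h_def)
  have leaf_edge: "E l x \<longleftrightarrow> h l = x" if "l \<in> P" "x \<in> M" for l x
    using card_nbhd_eq_1_the_elem(2)[of M E l x] one that by (simp add: h_def)
  have "card M > 0" using finM \<open>M \<noteq> {}\<close> by (simp add: card_gt_0_iff)
  have "corona_graph V E q d p A B P h"
  proof
    show "simple_graph V E" "triangle_free V E" by (fact sg, fact tf)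
    show "1 \<le> p" using \<open>card M > 0\<close> M(3) by (simp add: p_def)
    show "V = A \<union> B \<union> P" "A \<inter> B = {}" "A \<inter> P = {}" "B \<inter> P = {}" using V M by auto
    show "card A = p" "card B = p" using M(3,4) by (simp_all add: p_def)
    show "\<forall>l\<in>P. h l \<in> A \<union> B" using h_M M(1) by simp
    show "\<forall>u\<in>A \<union> B. \<forall>v\<in>A \<union> B. E u v \<longleftrightarrow> (u \<in> A \<and> v \<in> B) \<or> (u \<in> B \<and> v \<in> A)"
      using edges M(1) by simp
    show "\<forall>l\<in>P. \<forall>x\<in>A \<union> B. E l x \<longleftrightarrow> h l = x" using leaf_edge M(1) by simp
    show "\<forall>l\<in>P. card (nbhd P E l) \<le> d" by (fact leaf_deg)
    show "\<forall>x\<in>A \<union> B. card {l \<in> P. h l = x} = p + q"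
    proof
      fix x assume "x \<in> A \<union> B"
      then have x: "x \<in> M" using M(1) by simp
      have "{l \<in> P. h l = x} = nbhd P E x"
        using leaf_edge[OF _ x] sym by (auto simp: nbhd_def symp_def)
      moreover have "2 * card (nbhd M E x) = 2 * p" using reg x M(3) by (simp add: p_def)
      ultimately show "card {l \<in> P. h l = x} = p + q" using excess x by simp
    qed
  qed
  then show ?thesis using corona_family_iff[OF sg] by blast
qed

lemma bounded_sign_fn_nbhd_counts:
  fixes V :: "'a set" and f :: "'a \<Rightarrow> int"
  defines "P \<equiv> {v\<in>V. f v = 1}" and "M \<equiv> {v\<in>V. f v = -1}"
  assumes sg: "simple_graph V E" and deg: "min_deg_ge V E d" and f: "bounded_sign_fn V E d q f"
  shows "\<forall>v\<in>P. 1 \<le> card (nbhd M E v) \<and> card (nbhd P E v) + 1 \<le> card (nbhd M E v) + d"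
    and "\<forall>u\<in>M. card (nbhd P E u) \<le> card (nbhd M E u) + q"
proof -
  have finV: "finite V" using sg by (simp add: simple_graph_def)
  have pm: "\<forall>v\<in>V. f v \<in> {-1, 1}"
    and bound: "\<forall>v\<in>V. sum f (nbhd V E v) \<le> (if f v = 1 then int d - 1 else int q)"
    using f by (auto simp: bounded_sign_fn_def)
  have sum_nbhd: "sum f (nbhd V E v) = int (card (nbhd P E v)) - int (card (nbhd M E v))" for v
  proof -
    have "{u \<in> nbhd V E v. f u = 1} = nbhd P E v" "{u \<in> nbhd V E v. f u = -1} = nbhd M E v"
      by (auto simp: nbhd_def P_def M_def)
    then show ?thesis using sum_sign_eq_card_diff[of "nbhd V E v" f] pm finV
      by (simp add: finite_nbhd nbhd_def)
  qed
  have deg_split: "card (nbhd V E v) = card (nbhd P E v) + card (nbhd M E v)" for v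
  proof -
    have "nbhd V E v = nbhd P E v \<union> nbhd M E v" using pm by (auto simp: nbhd_def P_def M_def)
    then show ?thesis using finV
      by (simp add: card_Un_disjoint finite_nbhd nbhd_def disjoint_iff P_def M_def)
  qed
  show "\<forall>u\<in>M. card (nbhd P E u) \<le> card (nbhd M E u) + q"
    using bound sum_nbhd by (fastforce simp: M_def)
  show "\<forall>v\<in>P. 1 \<le> card (nbhd M E v) \<and> card (nbhd P E v) + 1 \<le> card (nbhd M E v) + d"
  proof
    fix v assume "v \<in> P"
    then have "card (nbhd P E v) + 1 \<le> card (nbhd M E v) + d"
      using bound sum_nbhd[of v] by (fastforce simp: P_def)
    moreover have "d \<le> card (nbhd V E v)" using deg \<open>v \<in> P\<close> by (simp add: min_deg_ge_def P_def)
    ultimately show "1 \<le> card (nbhd M E v) \<and> card (nbhd P E v) + 1 \<le> card (nbhd M E v) + d"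
      using deg_split[of v] by linarith
  qed
qed

lemma bounded_sign_fn_sum_le:
  assumes sg: "simple_graph V E" and tf: "triangle_free V E" and deg: "min_deg_ge V E d"
    and f: "bounded_sign_fn V E d q f"
  shows "real_of_int (sum f V) \<le> corona_bound (q + 1) (card V)"
    and "V \<noteq> {} \<Longrightarrow> real_of_int (sum f V) = corona_bound (q + 1) (card V) \<Longrightarrow> corona_family q d V E"
proof -
  define P where "P = {v\<in>V. f v = 1}"
  define M where "M = {v\<in>V. f v = -1}"
  have finV: "finite V" using sg by (simp add: simple_graph_def)
  have pm: "\<forall>v\<in>V. f v \<in> {-1, 1}" using f by (simp add: bounded_sign_fn_def)
  have V: "V = P \<union> M" "P \<inter> M = {}" using pm by (auto simp: P_def M_def)
  have finP: "finite P" and finM: "finite M" using finV by (auto simp: P_def M_def)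
  have tfM: "triangle_free M E" using tf by (rule triangle_free_subset) (simp add: M_def)
  have card_V: "card V = card P + card M" using V finP finM by (simp add: card_Un_disjoint)
  have sum_V: "sum f V = int (card P) - int (card M)"
    using sum_sign_eq_card_diff[OF finV pm] by (simp add: P_def M_def)
  note counts = bounded_sign_fn_nbhd_counts[OF sg deg f, folded P_def M_def]
  have dominated: "\<forall>v\<in>P. 1 \<le> card (nbhd M E v)" using counts(1) by blast
  note card_P = card_dominated_le[OF finP finM simple_graph_symp[OF sg] tfM dominated counts(2)]
  show "real_of_int (sum f V) \<le> corona_bound (q + 1) (card V)"
    using corona_bound_ge(1)[OF card_P(1)] sum_V card_V by (simp add: add.commute)
  assume "V \<noteq> {}" and "real_of_int (sum f V) = corona_bound (q + 1) (card V)"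
  then have tight: "2 * card P = card M ^ 2 + 2 * q * card M"
    using corona_bound_ge(2)[OF card_P(1)] sum_V card_V by (simp add: add.commute)
  have "M \<noteq> {}" using tight \<open>V \<noteq> {}\<close> V finP by auto
  have leaf_deg: "\<forall>v\<in>P. card (nbhd P E v) \<le> d" using counts(1) card_P(2)[OF tight] by fastforce
  show "corona_family q d V E"
    using corona_family_of_extremal_partition[OF sg tf V \<open>M \<noteq> {}\<close> _ _ _ leaf_deg]
      card_P(2)[OF tight] by blast
qed

definition max_bounded_sign_sum :: "'a set \<Rightarrow> ('a \<Rightarrow> 'a \<Rightarrow> bool) \<Rightarrow> nat \<Rightarrow> nat \<Rightarrow> int" where
  "max_bounded_sign_sum V E d q = Max {sum f V | f. bounded_sign_fn V E d q f}"

lemma signed_bad_number_eq_max: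
  "simple_graph V E \<Longrightarrow> signed_bad_number V E = max_bounded_sign_sum V E 1 2"
  by (simp add: signed_bad_number_def max_bounded_sign_sum_def is_SBF_iff_bounded_sign_fn)

lemma negative_decision_number_eq_max:
  "negative_decision_number V E = max_bounded_sign_sum V E 2 1"
  by (simp add: negative_decision_number_def max_bounded_sign_sum_def is_BF_iff_bounded_sign_fn)

lemma max_bounded_sign_sum_bound:
  assumes sg: "simple_graph V E" and "V \<noteq> {}" and tf: "triangle_free V E"
    and deg: "min_deg_ge V E d"
  shows "real_of_int (max_bounded_sign_sum V E d q) \<le> corona_bound (q + 1) (card V)"
    and "real_of_int (max_bounded_sign_sum V E d q) = corona_bound (q + 1) (card V)
      \<longleftrightarrow> corona_family q d V E"
proof -
  let ?S = "{sum f V | f. bounded_sign_fn V E d q f}"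
  have fin: "finite ?S"
    using sg by (intro finite_subset[OF _ finite_sums_of_sign_fns])
      (auto simp: bounded_sign_fn_def simple_graph_def)
  have "bounded_sign_fn V E d q (\<lambda>_. - 1)" by (simp add: bounded_sign_fn_def)
  then have "max_bounded_sign_sum V E d q \<in> ?S"
    unfolding max_bounded_sign_sum_def using fin by (intro Max_in) auto
  have ge: "sum g V \<le> max_bounded_sign_sum V E d q" if "bounded_sign_fn V E d q g" for g
    unfolding max_bounded_sign_sum_def using fin that by (auto intro: Max_ge)
  from \<open>max_bounded_sign_sum V E d q \<in> ?S\<close> obtain f where f: "bounded_sign_fn V E d q f" and max: "max_bounded_sign_sum V E d q = sum f V"
    by auto
  show le: "real_of_int (max_bounded_sign_sum V E d q) \<le> corona_bound (q + 1) (card V)"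
    using bounded_sign_fn_sum_le(1)[OF sg tf deg f] max by simp
  show "real_of_int (max_bounded_sign_sum V E d q) = corona_bound (q + 1) (card V)
      \<longleftrightarrow> corona_family q d V E"
  proof
    assume "real_of_int (max_bounded_sign_sum V E d q) = corona_bound (q + 1) (card V)"
    then show "corona_family q d V E"
      using bounded_sign_fn_sum_le(2)[OF sg tf deg f \<open>V \<noteq> {}\<close>] max by simp
  next
    assume "corona_family q d V E"
    then obtain p A B L h where "corona_graph V E q d p A B L h"
      using corona_family_iff[OF sg] by blast
    then obtain g where "bounded_sign_fn V E d q g" "real_of_int (sum g V) = corona_bound (q + 1) (card V)"
      using corona_graph.ex_extremal_bounded_sign_fn by blast
    then show "real_of_int (max_bounded_sign_sum V E d q) = corona_bound (q + 1) (card V)"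
      using ge[of g] le by linarith
  qed
qed

theorem theorem2p2:
  fixes V :: "'a set" and E :: "'a \<Rightarrow> 'a \<Rightarrow> bool" and n :: nat
  assumes "simple_graph V E" and "V \<noteq> {}" and "triangle_free V E" and "n = card V"
  shows "(min_deg_ge V E 1 \<longrightarrow>
            real_of_int (signed_bad_number V E) \<le> real n + 6 - 2 * sqrt (9 + 2 * real n) \<and>
            (real_of_int (signed_bad_number V E) = real n + 6 - 2 * sqrt (9 + 2 * real n)
               \<longleftrightarrow> in_Lambda V E))
       \<and> (min_deg_ge V E 2 \<longrightarrow>
            real_of_int (negative_decision_number V E) \<le> real n + 4 - 2 * sqrt (4 + 2 * real n) \<and>
            (real_of_int (negative_decision_number V E) = real n + 4 - 2 * sqrt (4 + 2 * real n)
               \<longleftrightarrow> in_Omega V E))"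
proof -
  have "corona_bound (2 + 1) n = real n + 6 - 2 * sqrt (9 + 2 * real n)"
    and "corona_bound (1 + 1) n = real n + 4 - 2 * sqrt (4 + 2 * real n)"
    by (simp_all add: corona_bound_def)
  then show ?thesis
    using max_bounded_sign_sum_bound[OF assms(1-3), of 1 2] max_bounded_sign_sum_bound[OF assms(1-3), of 2 1]
    by (simp add: assms(4) signed_bad_number_eq_max[OF assms(1)] negative_decision_number_eq_max
        in_Lambda_def in_Omega_def)
qed

end
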